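(* Let $N\geq 3$ be prime, $q\in\mathbb{C}$ with $q^N=1$, $q\neq1$, and let $X$ be a topological space. Let $\tau:\Delta^m\to X$ be a singular $m$-simplex, $m\geq 0$, and let $T_j=\tau(e_j)$ for $j=0,\dots,m$, regarded as singular $0$-simplices. Then $$\partial^m(\tau)=[m]_q!\cdot\sum_{j=0}^m q^j\,T_{m-j}.$$
   Context: $[k]_q=1+q+\cdots+q^{k-1}$ and $[m]_q!=[1]_q[2]_q\cdots[m]_q$, $[0]_q!=1$. $C^q_n(X)$ is the free $\mathbb{Z}[q]$-module on singular $n$-simplices $\sigma:\Delta^n\to X$, where $\Delta^n$ is the convex hull of the standard basis $e_0,\dots,e_n$ of $\mathbb{R}^{n+1}$; a singular $0$-simplex is identified with its image point. Face maps $\partial_j\sigma=\sigma\circ\lambda_j$, where $\lambda_j:\Delta^{n-1}\to\Delta^n$ is the affine map sending $e_0,\dots,e_{n-1}$ in order to $e_0,\dots,\widehat{e_j},\dots,e_n$; the border map is $\partial=\sum_{j=0}^n q^j\partial_j$ on $C^q_n(X)$ for $n\ge1$, extended linearly, and $\partial^m$ is its $m$-fold composition. *)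

theory Defs
  imports "HOL-Homology.Homology" "HOL-Library.Poly_Mapping" "HOL-Computational_Algebra.Primes"
begin

text \<open>Chains with complex coefficients (the coefficient ring Z[q] is taken inside C,
  since q is a given complex number): finitely supported functions on singular
  simplices, i.e. functions (nat => real) => 'a restricted to the standard simplex,
  as in HOL-Homology.\<close>
type_synonym 'a qchain = "((nat \<Rightarrow> real) \<Rightarrow> 'a) \<Rightarrow>\<^sub>0 complex"

definition qint :: "complex \<Rightarrow> nat \<Rightarrow> complex" where
  "qint q k = (\<Sum>i<k. q ^ i)"

definition qfact :: "complex \<Rightarrow> nat \<Rightarrow> complex" where
  "qfact q m = (\<Prod>k=1..m. qint q k)"

definition cscale :: "complex \<Rightarrow> 'a qchain \<Rightarrow> 'a qchain" where
  "cscale a c = Poly_Mapping.map (\<lambda>x. a * x) c"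

text \<open>HOL-Homology's
  singular_face p k is precomposition with the affine map lambda_k.\<close>
definition qbd :: "complex \<Rightarrow> nat \<Rightarrow> 'a qchain \<Rightarrow> 'a qchain" where
  "qbd q p c = (if p = 0 then 0 else
     (\<Sum>\<sigma>\<in>Poly_Mapping.keys c. \<Sum>k\<le>p. Poly_Mapping.single (singular_face p k \<sigma>) (q ^ k * Poly_Mapping.lookup c \<sigma>)))"

fun qbd_pow :: "complex \<Rightarrow> nat \<Rightarrow> nat \<Rightarrow> 'a qchain \<Rightarrow> 'a qchain" where
  "qbd_pow q 0 p c = c"
| "qbd_pow q (Suc k) p c = qbd_pow q k (p - 1) (qbd q p c)"

definition std_basis :: "nat \<Rightarrow> nat \<Rightarrow> real" where
  "std_basis j = (\<lambda>i. if i = j then 1 else 0)"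

definition point_simplex :: "'a \<Rightarrow> (nat \<Rightarrow> real) \<Rightarrow> 'a" where
  "point_simplex x = restrict (\<lambda>_. x) (standard_simplex 0)"

end

theory Submission imports Defs begin

text \<open>The k-th face of an (m+1)-simplex with vertices T_0, ..., T_(m+1) has the vertices
  T_i, i ~= k, in order. Induction on m along this description shows that the m-fold border
  sends an m-simplex to [m]_q! * Sum_i q^(m-i) T_i: writing the (m+1)-fold border of tau as
  the m-fold border of Sum_k q^k face_k(tau), the vertex T_t collects the weight q^k q^(m-t)
  from each face k > t and q^k q^(m+1-t) from each face k < t, and these add up to
  q^(m+1-t) [m+1]_q.\<close>

lemma single_sum:
  "finite S \<Longrightarrow> Poly_Mapping.single x (\<Sum>y\<in>S. f y) = (\<Sum>y\<in>S. Poly_Mapping.single x (f y))"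
  by (induction S rule: finite_induct) (auto simp: single_add)

lemma sum_single_group:
  assumes "finite A" "finite B" "g ` A \<subseteq> B"
  shows "(\<Sum>x\<in>A. Poly_Mapping.single (P (g x)) (w x))
       = (\<Sum>t\<in>B. Poly_Mapping.single (P t) (\<Sum>x\<in>{x\<in>A. g x = t}. w x))"
proof -
  have "(\<Sum>x\<in>A. Poly_Mapping.single (P (g x)) (w x))
      = (\<Sum>t\<in>B. \<Sum>x\<in>{x\<in>A. g x = t}. Poly_Mapping.single (P t) (w x))"
    by (subst sum.group[OF assms, symmetric]) (auto intro!: sum.cong)
  then show ?thesis
    using assms by (simp add: single_sum)
qed

lemma cscale_add: "cscale a (c1 + c2) = cscale a c1 + cscale a c2"
  by (rule poly_mapping_eqI)
     (auto simp: cscale_def map.rep_eq lookup_add when_def simp flip: distrib_left)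

lemma cscale_zero: "cscale a 0 = 0"
  by (rule poly_mapping_eqI) (simp add: cscale_def map.rep_eq)

lemma cscale_sum: "finite S \<Longrightarrow> cscale a (\<Sum>y\<in>S. f y) = (\<Sum>y\<in>S. cscale a (f y))"
  by (induction S rule: finite_induct) (simp_all add: cscale_zero cscale_add)

lemma cscale_single: "cscale a (Poly_Mapping.single x b) = Poly_Mapping.single x (a * b)"
  by (simp add: cscale_def)

lemma qbd_eq_sum_superset:
  assumes "finite S" "Poly_Mapping.keys c \<subseteq> S" "p \<noteq> 0"
  shows "qbd q p c = (\<Sum>\<sigma>\<in>S. \<Sum>k\<le>p.
           Poly_Mapping.single (singular_face p k \<sigma>) (q ^ k * Poly_Mapping.lookup c \<sigma>))"
  unfolding qbd_def using assms by (auto intro!: sum.mono_neutral_left simp: in_keys_iff)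

lemma qbd_single:
  "p \<noteq> 0 \<Longrightarrow> qbd q p (Poly_Mapping.single \<sigma> a)
     = (\<Sum>k\<le>p. Poly_Mapping.single (singular_face p k \<sigma>) (q ^ k * a))"
  by (subst qbd_eq_sum_superset[of "{\<sigma>}"]) auto

lemma qbd_add: "qbd q p (c1 + c2) = qbd q p c1 + qbd q p c2"
proof (cases "p = 0")
  case True
  then show ?thesis by (simp add: qbd_def)
next
  case False
  let ?S = "Poly_Mapping.keys c1 \<union> Poly_Mapping.keys c2"
  have expand: "qbd q p c = (\<Sum>\<sigma>\<in>?S. \<Sum>k\<le>p.
      Poly_Mapping.single (singular_face p k \<sigma>) (q ^ k * Poly_Mapping.lookup c \<sigma>))"
    if "Poly_Mapping.keys c \<subseteq> ?S" for c
    using that False by (intro qbd_eq_sum_superset) auto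
  have "Poly_Mapping.keys (c1 + c2) \<subseteq> ?S"
    by (rule keys_add)
  then show ?thesis
    by (simp add: expand lookup_add distrib_left single_add sum.distrib)
qed

lemma qbd_pow_add: "qbd_pow q n p (c1 + c2) = qbd_pow q n p c1 + qbd_pow q n p c2"
  by (induction n arbitrary: p c1 c2) (simp_all add: qbd_add)

lemma qbd_pow_zero: "qbd_pow q n p 0 = 0"
  by (induction n arbitrary: p) (simp_all add: qbd_def)

lemma qbd_pow_sum: "finite S \<Longrightarrow> qbd_pow q n p (\<Sum>y\<in>S. f y) = (\<Sum>y\<in>S. qbd_pow q n p (f y))"
  by (induction S rule: finite_induct) (simp_all add: qbd_pow_add qbd_pow_zero)

lemma std_basis_in_standard_simplex: "i \<le> m \<Longrightarrow> std_basis i \<in> standard_simplex m"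
  by (auto simp: standard_simplex_def std_basis_def)

lemma simplical_face_std_basis:
  "simplical_face k (std_basis i) = std_basis (if i < k then i else Suc i)"
  by (auto simp: simplical_face_def std_basis_def fun_eq_iff)

lemma singular_face_vertex:
  "i \<le> m \<Longrightarrow> singular_face (Suc m) k \<tau> (std_basis i) = \<tau> (std_basis (if i < k then i else Suc i))"
  by (simp add: singular_face_def std_basis_in_standard_simplex simplical_face_std_basis)

lemma point_simplex_vertex:
  assumes "\<tau> \<in> extensional (standard_simplex 0)"
  shows "point_simplex (\<tau> (std_basis 0)) = \<tau>"
proof
  fix x
  have "x \<in> standard_simplex 0 \<Longrightarrow> x = std_basis 0"
    by (auto simp: standard_simplex_def std_basis_def fun_eq_iff)
  with assms show "point_simplex (\<tau> (std_basis 0)) x = \<tau> x"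
    by (auto simp: point_simplex_def extensional_def)
qed

lemma sum_powers_skip:
  assumes "t \<le> Suc m"
  shows "(\<Sum>k\<in>{..Suc m}-{t}. (q::complex) ^ (if k < t then k else k - 1)) = qint q (Suc m)"
proof -
  have "bij_betw (\<lambda>k. if k < t then k else k - 1) ({..Suc m}-{t}) {..<Suc m}"
    by (rule bij_betw_byWitness[where f'="\<lambda>i. if i < t then i else Suc i"]) (use assms in auto)
  then show ?thesis
    unfolding qint_def by (rule sum.reindex_bij_betw)
qed

lemma face_vertex_weight:
  assumes t: "t \<le> Suc m"
  shows "(\<Sum>k\<le>Suc m. \<Sum>i\<in>{i\<in>{..m}. (if i < k then i else Suc i) = t}. q ^ k * q ^ (m - i))
       = q ^ (Suc m - t) * qint q (Suc m)"
proof -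
  have vertex_preimage: "{i\<in>{..m}. (if i < k then i else Suc i) = t}
      = (if k = t then {} else if k < t then {t - 1} else {t})" if "k \<le> Suc m" for k
    using that t by (auto split: if_splits)
  have "(\<Sum>i\<in>{i\<in>{..m}. (if i < k then i else Suc i) = t}. q ^ k * q ^ (m - i))
      = (if k = t then 0 else q ^ (Suc m - t) * q ^ (if k < t then k else k - 1))"
    if k: "k \<le> Suc m" for k
  proof (cases "k = t")
    case False
    have "k + (m - (if k < t then t - 1 else t)) = (Suc m - t) + (if k < t then k else k - 1)"
      using k t False by auto
    then have "q ^ k * q ^ (m - (if k < t then t - 1 else t))
             = q ^ (Suc m - t) * q ^ (if k < t then k else k - 1)"
      by (metis power_add)
    moreover have "{i\<in>{..m}. (if i < k then i else Suc i) = t} = {if k < t then t - 1 else t}"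
      unfolding vertex_preimage[OF k] using False by simp
    ultimately show ?thesis
      using False by simp
  qed (simp add: vertex_preimage[OF k])
  then have "(\<Sum>k\<le>Suc m. \<Sum>i\<in>{i\<in>{..m}. (if i < k then i else Suc i) = t}. q ^ k * q ^ (m - i))
      = (\<Sum>k\<le>Suc m. if k = t then 0 else q ^ (Suc m - t) * q ^ (if k < t then k else k - 1))"
    by (intro sum.cong) auto
  also have "\<dots> = (\<Sum>k\<in>{..Suc m}-{t}. q ^ (Suc m - t) * q ^ (if k < t then k else k - 1))"
    by (subst sum.mono_neutral_right[of "{..Suc m}" "{..Suc m}-{t}"]) auto
  finally show ?thesis
    by (simp add: sum_distrib_left[symmetric] sum_powers_skip[OF t])
qed

lemma qfact_Suc: "qfact q (Suc m) = qfact q m * qint q (Suc m)"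
  by (simp add: qfact_def)

lemma qbd_pow_single:
  "\<tau> \<in> extensional (standard_simplex m) \<Longrightarrow>
   qbd_pow q m m (Poly_Mapping.single \<tau> a) =
   (\<Sum>i\<le>m. Poly_Mapping.single (point_simplex (\<tau> (std_basis i))) (a * qfact q m * q ^ (m - i)))"
proof (induction m arbitrary: \<tau> a)
  case 0
  then show ?case by (simp add: qfact_def point_simplex_vertex)
next
  case (Suc m)
  let ?T = "\<lambda>t. point_simplex (\<tau> (std_basis t))"
  let ?\<delta> = "\<lambda>k i. if i < k then i else Suc i"
  let ?w = "\<lambda>k i. a * qfact q m * (q ^ k * q ^ (m - i))"
  have faces_extensional: "singular_face (Suc m) k \<tau> \<in> extensional (standard_simplex m)" for k
    by (simp add: singular_face_def)
  have vertex_weight: "(\<Sum>k\<le>Suc m. \<Sum>i\<in>{i\<in>{..m}. ?\<delta> k i = t}. ?w k i)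
      = a * qfact q (Suc m) * q ^ (Suc m - t)" if "t \<in> {..Suc m}" for t
    unfolding sum_distrib_left[of "a * qfact q m", symmetric]
      face_vertex_weight[OF that[unfolded atMost_iff]] qfact_Suc
    by (simp only: ac_simps)
  have "qbd_pow q (Suc m) (Suc m) (Poly_Mapping.single \<tau> a)
      = (\<Sum>k\<le>Suc m. qbd_pow q m m (Poly_Mapping.single (singular_face (Suc m) k \<tau>) (q ^ k * a)))"
    by (simp add: qbd_single qbd_pow_sum del: sum.atMost_Suc)
  also have "\<dots> = (\<Sum>k\<le>Suc m. \<Sum>i\<le>m. Poly_Mapping.single (?T (?\<delta> k i)) (?w k i))"
    by (intro sum.cong refl) (simp add: Suc.IH[OF faces_extensional] singular_face_vertex ac_simps)
  also have "\<dots> = (\<Sum>k\<le>Suc m. \<Sum>t\<le>Suc m. Poly_Mapping.single (?T t) (\<Sum>i\<in>{i\<in>{..m}. ?\<delta> k i = t}. ?w k i))"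
    by (intro sum.cong refl sum_single_group) auto
  also have "\<dots> = (\<Sum>t\<le>Suc m. Poly_Mapping.single (?T t) (\<Sum>k\<le>Suc m. \<Sum>i\<in>{i\<in>{..m}. ?\<delta> k i = t}. ?w k i))"
    by (simp only: single_sum[OF finite_atMost]) (rule sum.swap)
  also have "\<dots> = (\<Sum>t\<le>Suc m. Poly_Mapping.single (?T t) (a * qfact q (Suc m) * q ^ (Suc m - t)))"
    by (rule sum.cong[OF refl], rule cong[OF refl vertex_weight])
  finally show ?case .
qed

theorem lemma4p5:
  fixes N :: nat and q :: complex and X :: "'a topology"
    and \<tau> :: "(nat \<Rightarrow> real) \<Rightarrow> 'a" and m :: nat
  assumes "N \<ge> 3" and "prime N" and "q ^ N = 1" and "q \<noteq> 1"
    and "singular_simplex m X \<tau>"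
  shows "qbd_pow q m m (Poly_Mapping.single \<tau> 1) =
         cscale (qfact q m)
           (\<Sum>j\<le>m. Poly_Mapping.single (point_simplex (\<tau> (std_basis (m - j)))) (q ^ j))"
proof -
  have "\<tau> \<in> extensional (standard_simplex m)"
    using \<open>singular_simplex m X \<tau>\<close> by (simp add: singular_simplex_def)
  then have "qbd_pow q m m (Poly_Mapping.single \<tau> 1)
      = (\<Sum>i\<le>m. Poly_Mapping.single (point_simplex (\<tau> (std_basis i))) (qfact q m * q ^ (m - i)))"
    by (simp add: qbd_pow_single)
  also have "\<dots> = (\<Sum>j\<le>m. Poly_Mapping.single (point_simplex (\<tau> (std_basis (m - j)))) (qfact q m * q ^ j))"
    unfolding atMost_atLeast0 by (subst sum.atLeastAtMost_rev) simp
  finally show ?thesis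
    by (simp add: cscale_sum cscale_single)
qed

end
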